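(* Consider a $\delta$-discretized episodic environment with physical time limit $T>0$ and discretization time scale $\delta>0$, so that a rollout has $N = T/\delta$ decision steps, with initial state distribution $p(s_0)$ and (stochastic) transition kernel $p(s_{i+1}\mid s_i,a_i)$, and action space of dimension $K$. Let the policy be $\pi_\theta(a_i\mid s_i) = \mathcal{N}(\mu_{\theta_\mu}(s_i), \Sigma)$, where $\mu_{\theta_\mu}(s) = [\mu_{\theta_\mu,1}(s),\dots,\mu_{\theta_\mu,K}(s)]^\top$ is a neural network with parameters $\theta_\mu$ whose output layer is affine with bias parameters $b_1,\dots,b_K$ (so $\mu_{\theta_\mu}(s) = \mu'(s) + [b_1,\dots,b_K]^\top$ with $b_1,\dots,b_K$ among the entries of $\theta_\mu$ and $\mu'$ not depending on them), and $\Sigma = \mathrm{diag}(\sigma_1^2,\dots,\sigma_K^2)$ with $\sigma_k>0$ learnable and state-independent; the full parameter vector is $\theta = [\theta_\mu^\top, \sigma_1,\dots,\sigma_K]^\top$. Let $\tau=(s_0,a_0,\dots,s_N)$ be distributed as $p_\theta(\tau) = p(s_0)\prod_{i=0}^{N-1}\pi_\theta(a_i\mid s_i)\,p(s_{i+1}\mid s_i,a_i)$, let $R(\tau)$ be its (real-valued) return, and define the policy gradient estimator $$G_\theta(\tau) = \Big(\sum_{i=0}^{N-1}\nabla_\theta \log \pi_\theta(a_i\mid s_i)\Big) R(\tau).$$ Reparameterize the actions as $a_i = \mu_{\theta_\mu}(s_i) + \Sigma^{1/2}\epsilon_i$ with $\epsilon_0,\dots,\epsilon_{N-1}$ i.i.d.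 $\mathcal{N}(0,I_K)$, and let $p_\theta(s_{0:N}\mid \epsilon_{0:N-1})$ denote the induced conditional distribution of the states given the noise. Suppose there is a constant $c>0$ such that for every $\epsilon_{0:N-1}$, $$\mathbb{V}_{s_{0:N}\sim p_\theta(s_{0:N}\mid \epsilon_{0:N-1})}\big[R(\tau)\big] \ge c.$$ Then $$\mathrm{tr}\Big[\mathbb{V}_{\tau\sim p_\theta(\tau)}\big[G_\theta(\tau)\big]\Big] \ \ge\ \frac{Tc}{\delta\cdot \min(\sigma_1^2,\sigma_2^2,\dots,\sigma_K^2)}.$$
   Context: $\mathbb{V}[X]$ denotes the variance of a random variable $X$, or its covariance matrix if $X$ is vector-valued; $\mathrm{tr}$ is the matrix trace. The state sequence $s_{0:N}$ together with the noise $\epsilon_{0:N-1}$ determines the trajectory $\tau$ (hence $R(\tau)$), since actions are functions of states and noise. *)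

theory Defs
  imports "HOL-Probability.Probability"
begin

definition grad :: "('a::real_inner \<Rightarrow> real) \<Rightarrow> 'a \<Rightarrow> 'a" where
  "grad f x = (THE D. GDERIV f x :> D)"

definition ext_variance :: "'a measure \<Rightarrow> ('a \<Rightarrow> real) \<Rightarrow> ennreal" where
  "ext_variance M X =
     (if integrable M X then (\<integral>\<^sup>+ x. ennreal ((X x - (\<integral>y. X y \<partial>M))\<^sup>2) \<partial>M) else \<infinity>)"

definition trace_cov :: "'a measure \<Rightarrow> ('a \<Rightarrow> 'b::euclidean_space) \<Rightarrow> ennreal" where
  "trace_cov M X = (\<Sum>j\<in>Basis. ext_variance M (\<lambda>x. X x \<bullet> j))"

text \<open>Trajectories: states s 0 .. s n and actions a 0 .. a (n-1).\<close>
type_synonym ('s, 'k) traj = "(nat \<Rightarrow> 's) \<times> (nat \<Rightarrow> real ^ 'k)"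

definition trajM :: "'s measure \<Rightarrow> nat \<Rightarrow> ('s, 'k::finite) traj measure" where
  "trajM SM n = (PiM {..n} (\<lambda>_. SM)) \<Otimes>\<^sub>M (PiM {..<n} (\<lambda>_. (borel :: (real ^ 'k) measure)))"

fun traj_measure ::
  "'s measure \<Rightarrow> 's measure \<Rightarrow> (nat \<Rightarrow> 's \<Rightarrow> (real ^ 'k) measure)
   \<Rightarrow> ('s \<Rightarrow> real ^ 'k \<Rightarrow> 's measure) \<Rightarrow> nat \<Rightarrow> ('s, 'k::finite) traj measure" where
  "traj_measure SM p0 pol P 0 =
     distr p0 (trajM SM 0) (\<lambda>s0. (\<lambda>i\<in>{..0}. s0, \<lambda>i\<in>{..<0}. undefined))"
| "traj_measure SM p0 pol P (Suc n) =
     traj_measure SM p0 pol P n \<bind> (\<lambda>(s, a).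
       pol n (s n) \<bind> (\<lambda>a'. P (s n) a' \<bind> (\<lambda>s'.
         return (trajM SM (Suc n)) (s(Suc n := s'), a(n := a')))))"

definition gauss_pol :: "real ^ 'k \<Rightarrow> real ^ 'k \<Rightarrow> (real ^ 'k::finite) measure" where
  "gauss_pol m sig = density lborel (\<lambda>a. \<Prod>k\<in>UNIV. normal_density (m $ k) (sig $ k) (a $ k))"

definition log_pi :: "(real ^ 'p \<Rightarrow> 's \<Rightarrow> real ^ 'k)
   \<Rightarrow> (real ^ 'p) \<times> (real ^ 'k) \<times> (real ^ 'k) \<Rightarrow> 's \<Rightarrow> real ^ 'k::finite \<Rightarrow> real" where
  "log_pi mu' \<theta> s a = (case \<theta> of (\<theta>p, b, sig) \<Rightarrow>
     (\<Sum>k\<in>UNIV. ln (normal_density ((mu' \<theta>p s + b) $ k) (sig $ k) (a $ k))))"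

definition pg_estimator :: "(real ^ 'p \<Rightarrow> 's \<Rightarrow> real ^ 'k)
   \<Rightarrow> (real ^ 'p) \<times> (real ^ 'k) \<times> (real ^ 'k) \<Rightarrow> nat \<Rightarrow> (('s, 'k) traj \<Rightarrow> real)
   \<Rightarrow> ('s, 'k::finite) traj \<Rightarrow> (real ^ 'p) \<times> (real ^ 'k) \<times> (real ^ 'k)" where
  "pg_estimator mu' \<theta> N R \<tau> =
     R \<tau> *\<^sub>R (\<Sum>i<N. grad (\<lambda>th. log_pi mu' th (fst \<tau> i) (snd \<tau> i)) \<theta>)"

end

theory Submission
  imports Defs
begin

(* Reparameterize the Gaussian actions as a_i = mu(s_i) + sigma * eps_i.  The law of the trajectory
   is then a mixture, over the noise eps_0, ..., eps_(N-1), of the laws with the noise held fixed, so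
   by the law of total variance every coordinate of the estimator has variance at least the average
   over eps of its conditional variance.  The coordinate belonging to the bias b_k is R(tau) times
   the score sum_i (a_i - mu(s_i))_k / sigma_k^2 = sum_i eps_(i,k) / sigma_k, which is constant once
   eps is fixed; hence its conditional variance is at least (sum_i eps_(i,k))^2 c / sigma_k^2, whose
   mean over eps is N c / sigma_k^2.  Taking k with minimal sigma_k and bounding the trace by this
   single coordinate gives the claim, since N = T / delta. *)

lemma continuous_on_vec_mult_left: "continuous_on S (\<lambda>x::real ^ 'k::finite. s * x)"
proof -
  have "(\<lambda>x::real ^ 'k. s * x) = (\<lambda>x. \<chi> i. s $ i * x $ i)"
    by (simp add: fun_eq_iff vec_eq_iff)
  then show ?thesis
    by (simp add: continuous_on_vec_lambda continuous_on_mult_left continuous_on_component)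
qed

lemma borel_measurable_vec_mult_left[measurable]:
  "(\<lambda>x::real ^ 'k::finite. s * x) \<in> borel_measurable borel"
  by (rule borel_measurable_continuous_onI[OF continuous_on_vec_mult_left])

lemma borel_measurable_vec_nth[measurable]: "(\<lambda>v :: real ^ 'k::finite. v $ k) \<in> borel_measurable borel"
  by (intro borel_measurable_continuous_onI continuous_intros)

lemma prod_Basis_vec:
  fixes f :: "real ^ 'k::finite \<Rightarrow> 'a::comm_monoid_mult"
  shows "(\<Prod>b\<in>Basis. f b) = (\<Prod>i\<in>UNIV. f (axis i 1))"
proof -
  have Basis: "Basis = range (\<lambda>i::'k. axis i (1::real))"
    by (auto simp: Basis_vec_def)
  have "inj (\<lambda>i::'k. axis i (1::real))"
    by (auto simp: inj_def axis_eq_axis)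
  then show ?thesis
    unfolding Basis by (simp add: prod.reindex o_def)
qed

lemma vec_mult_eq_sum_Basis:
  fixes s x :: "real ^ 'k::finite"
  shows "s * x = (\<Sum>b\<in>Basis. ((s \<bullet> b) * (x \<bullet> b)) *\<^sub>R b)"
proof -
  have "s * x = (\<Sum>b\<in>Basis. ((s * x) \<bullet> b) *\<^sub>R b)"
    by (simp add: euclidean_representation)
  also have "\<dots> = (\<Sum>b\<in>Basis. ((s \<bullet> b) * (x \<bullet> b)) *\<^sub>R b)"
    by (intro sum.cong refl) (auto simp: Basis_vec_def inner_axis)
  finally show ?thesis .
qed

lemma nn_integral_lborel_prod_vec:
  fixes f :: "'k::finite \<Rightarrow> real \<Rightarrow> ennreal"
  assumes "\<And>i. f i \<in> borel_measurable borel"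
  shows "(\<integral>\<^sup>+x. (\<Prod>i\<in>UNIV. f i (x $ i)) \<partial>(lborel :: (real ^ 'k) measure))
    = (\<Prod>i\<in>UNIV. \<integral>\<^sup>+y. f i y \<partial>lborel)"
proof -
  define g where "g b = f (SOME i. b = axis i 1)" for b :: "real ^ 'k"
  have g_axis: "g (axis i 1) = f i" for i
    by (simp add: g_def axis_eq_axis)
  have "(\<integral>\<^sup>+x. (\<Prod>i\<in>UNIV. f i (x $ i)) \<partial>(lborel :: (real ^ 'k) measure))
      = (\<integral>\<^sup>+x. (\<Prod>b\<in>Basis. g b (x \<bullet> b)) \<partial>lborel)"
    by (simp add: prod_Basis_vec inner_axis g_axis)
  also have "\<dots> = (\<Prod>b\<in>Basis. \<integral>\<^sup>+y. g b y \<partial>lborel)"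
    by (rule nn_integral_lborel_prod) (simp_all add: g_def assms)
  also have "\<dots> = (\<Prod>i\<in>UNIV. \<integral>\<^sup>+y. f i y \<partial>lborel)"
    by (simp add: prod_Basis_vec g_axis)
  finally show ?thesis .
qed

lemma measurable_fun_upd_atMost_Suc[measurable (raw)]:
  "f \<in> N \<rightarrow>\<^sub>M Pi\<^sub>M {..n} M \<Longrightarrow> g \<in> N \<rightarrow>\<^sub>M M (Suc n) \<Longrightarrow>
    (\<lambda>x. (f x)(Suc n := g x)) \<in> N \<rightarrow>\<^sub>M Pi\<^sub>M {..Suc n} M"
  by (rule measurable_fun_upd) auto

lemma measurable_fun_upd_lessThan_Suc[measurable (raw)]:
  "f \<in> N \<rightarrow>\<^sub>M Pi\<^sub>M {..<n} M \<Longrightarrow> g \<in> N \<rightarrow>\<^sub>M M n \<Longrightarrow>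
    (\<lambda>x. (f x)(n := g x)) \<in> N \<rightarrow>\<^sub>M Pi\<^sub>M {..<Suc n} M"
  by (rule measurable_fun_upd) auto

lemma measurable_fun_upd_UNIV[measurable (raw)]:
  "f \<in> N \<rightarrow>\<^sub>M Pi\<^sub>M UNIV M \<Longrightarrow> g \<in> N \<rightarrow>\<^sub>M M n \<Longrightarrow>
    (\<lambda>x. (f x)(n := g x)) \<in> N \<rightarrow>\<^sub>M Pi\<^sub>M UNIV M"
  by (rule measurable_fun_upd) auto

lemma ext_variance_cong:
  assumes "\<And>x. x \<in> space M \<Longrightarrow> f x = g x"
  shows "ext_variance M f = ext_variance M g"
proof -
  have "integrable M f = integrable M g"
    using assms by (intro Bochner_Integration.integrable_cong) auto
  moreover have "(\<integral>x. f x \<partial>M) = (\<integral>x. g x \<partial>M)"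
    using assms by (intro Bochner_Integration.integral_cong) auto
  ultimately show ?thesis
    unfolding ext_variance_def using assms by (auto intro!: nn_integral_cong)
qed

lemma ext_variance_cong_AE:
  assumes [measurable]: "f \<in> borel_measurable M" "g \<in> borel_measurable M"
    and eq: "AE x in M. f x = g x"
  shows "ext_variance M f = ext_variance M g"
proof -
  have "integrable M f = integrable M g"
    using eq by (intro integrable_cong_AE) auto
  moreover have "(\<integral>x. f x \<partial>M) = (\<integral>x. g x \<partial>M)"
    using eq by (intro integral_cong_AE) auto
  moreover have "(\<integral>\<^sup>+x. ennreal ((f x - \<mu>)\<^sup>2) \<partial>M) = (\<integral>\<^sup>+x. ennreal ((g x - \<mu>)\<^sup>2) \<partial>M)" for \<mu>
    using eq by (intro nn_integral_cong_AE) auto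
  ultimately show ?thesis
    by (simp add: ext_variance_def)
qed

lemma ext_variance_le_nn_integral_sq:
  assumes "prob_space M" and [measurable]: "f \<in> borel_measurable M"
  shows "ext_variance M f \<le> (\<integral>\<^sup>+x. ennreal ((f x - c)\<^sup>2) \<partial>M)"
proof (cases "(\<integral>\<^sup>+x. ennreal ((f x - c)\<^sup>2) \<partial>M) = \<infinity>")
  case False
  interpret prob_space M by fact
  define g where "g x = f x - c" for x
  have [measurable]: "g \<in> borel_measurable M"
    unfolding g_def by measurable
  have g_sq: "integrable M (\<lambda>x. (g x)\<^sup>2)"
    using False by (intro integrableI_nonneg) (auto simp: g_def top.not_eq_extremum)
  have g: "integrable M g"
    by (rule square_integrable_imp_integrable) (use g_sq in auto)
  then have f: "integrable M f"
    using Bochner_Integration.integrable_add[OF g integrable_const[of c]] by (simp add: g_def)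
  have dev: "f x - expectation f = g x - expectation g" for x
    using f unfolding g_def by (simp add: Bochner_Integration.integral_diff prob_space)
  have "ext_variance M f = (\<integral>\<^sup>+x. ennreal ((g x - expectation g)\<^sup>2) \<partial>M)"
    using f by (simp add: ext_variance_def dev)
  also have "\<dots> = ennreal (variance g)"
  proof (intro nn_integral_eq_integral)
    show "integrable M (\<lambda>x. (g x - expectation g)\<^sup>2)"
      using g g_sq unfolding power2_diff
      by (intro Bochner_Integration.integrable_diff Bochner_Integration.integrable_add
          Bochner_Integration.integrable_mult_right) auto
  qed simp
  also have "\<dots> \<le> ennreal (expectation (\<lambda>x. (g x)\<^sup>2))"
    using g g_sq by (intro ennreal_leI) (simp add: variance_eq)
  also have "\<dots> = (\<integral>\<^sup>+x. ennreal ((f x - c)\<^sup>2) \<partial>M)"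
    using g_sq by (subst nn_integral_eq_integral) (auto simp: g_def)
  finally show ?thesis .
qed simp

lemma ext_variance_scale:
  "ext_variance M (\<lambda>x. a * f x) = ennreal (a\<^sup>2) * ext_variance M f"
proof (cases "a = 0 \<or> \<not> integrable M f")
  case True
  then show ?thesis
    by (auto simp: ext_variance_def)
next
  case False
  then have f: "integrable M f" and "a \<noteq> 0" by auto
  then have [measurable]: "f \<in> borel_measurable M" by auto
  have "(\<integral>\<^sup>+x. ennreal ((a * f x - a * (\<integral>y. f y \<partial>M))\<^sup>2) \<partial>M)
      = (\<integral>\<^sup>+x. ennreal (a\<^sup>2) * ennreal ((f x - (\<integral>y. f y \<partial>M))\<^sup>2) \<partial>M)"
    by (simp add: ennreal_mult'[symmetric] power_mult_distrib right_diff_distrib[symmetric])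
  also have "\<dots> = ennreal (a\<^sup>2) * (\<integral>\<^sup>+x. ennreal ((f x - (\<integral>y. f y \<partial>M))\<^sup>2) \<partial>M)"
    by (intro nn_integral_cmult) measurable
  finally show ?thesis
    using f \<open>a \<noteq> 0\<close> by (simp add: ext_variance_def)
qed

lemma nn_integral_ext_variance_le_bind:
  assumes K: "K \<in> M \<rightarrow>\<^sub>M prob_algebra N" and [measurable]: "f \<in> borel_measurable N"
  shows "(\<integral>\<^sup>+x. ext_variance (K x) f \<partial>M) \<le> ext_variance (M \<bind> K) f"
proof (cases "integrable (M \<bind> K) f")
  case True
  define \<mu> where "\<mu> = (\<integral>y. f y \<partial>(M \<bind> K))"
  have "(\<integral>\<^sup>+x. ext_variance (K x) f \<partial>M) \<le> (\<integral>\<^sup>+x. \<integral>\<^sup>+y. ennreal ((f y - \<mu>)\<^sup>2) \<partial>K x \<partial>M)"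
  proof (rule nn_integral_mono)
    fix x assume "x \<in> space M"
    then have "K x \<in> space (prob_algebra N)"
      using K by (rule measurable_space[rotated])
    then have "prob_space (K x)" and "sets (K x) = sets N"
      by (auto simp: space_prob_algebra)
    then show "ext_variance (K x) f \<le> (\<integral>\<^sup>+y. ennreal ((f y - \<mu>)\<^sup>2) \<partial>K x)"
      by (intro ext_variance_le_nn_integral_sq) (simp_all cong: measurable_cong_sets)
  qed
  also have "\<dots> = (\<integral>\<^sup>+y. ennreal ((f y - \<mu>)\<^sup>2) \<partial>(M \<bind> K))"
    by (rule nn_integral_bind[symmetric]) (use measurable_prob_algebraD[OF K] in measurable)
  also have "\<dots> = ext_variance (M \<bind> K) f"
    using True by (simp add: ext_variance_def \<mu>_def)
  finally show ?thesis .
qed (simp add: ext_variance_def)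

lemma ext_variance_inner_le_trace_cov:
  assumes "j \<in> Basis"
  shows "ext_variance M (\<lambda>x. X x \<bullet> j) \<le> trace_cov M X"
  unfolding trace_cov_def using assms by (rule member_le_sum) auto

lemma sets_gauss_pol[simp, measurable_cong]: "sets (gauss_pol m s) = sets borel"
  by (simp add: gauss_pol_def)

lemma nn_integral_gauss_pol_std_prod:
  fixes f :: "'k::finite \<Rightarrow> real \<Rightarrow> ennreal"
  assumes [measurable]: "\<And>i. f i \<in> borel_measurable borel"
  shows "(\<integral>\<^sup>+e. (\<Prod>i\<in>UNIV. f i (e $ i)) \<partial>gauss_pol (0 :: real ^ 'k) 1)
    = (\<Prod>i\<in>UNIV. \<integral>\<^sup>+y. std_normal_density y * f i y \<partial>lborel)"
proof -
  have "(\<integral>\<^sup>+e. (\<Prod>i\<in>UNIV. f i (e $ i)) \<partial>gauss_pol (0 :: real ^ 'k) 1)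
      = (\<integral>\<^sup>+e. (\<Prod>i\<in>UNIV. std_normal_density (e $ i) * f i (e $ i)) \<partial>lborel)"
    unfolding gauss_pol_def
    by (subst nn_integral_density) (auto simp: prod_ennreal[symmetric] prod.distrib)
  also have "\<dots> = (\<Prod>i\<in>UNIV. \<integral>\<^sup>+y. std_normal_density y * f i y \<partial>lborel)"
    by (rule nn_integral_lborel_prod_vec) simp
  finally show ?thesis .
qed

lemma nn_integral_std_normal_density: "(\<integral>\<^sup>+y. ennreal (std_normal_density y) \<partial>lborel) = 1"
  by (subst nn_integral_eq_integral) auto

lemma nn_integral_std_normal_shift_sq:
  "(\<integral>\<^sup>+y. ennreal (std_normal_density y * (x + y)\<^sup>2) \<partial>lborel) = ennreal (x\<^sup>2 + 1)"
proof -
  have "has_bochner_integral lborel (\<lambda>y. std_normal_density y * y ^ (2 * 0)) 1"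
    and "has_bochner_integral lborel (\<lambda>y. std_normal_density y * y ^ (2 * 0 + 1)) 0"
    and "has_bochner_integral lborel (\<lambda>y. std_normal_density y * y ^ (2 * 1)) 1"
    using std_normal_moment_even[of 0] std_normal_moment_odd[of 0] std_normal_moment_even[of 1]
    by simp_all
  then have "has_bochner_integral lborel
      (\<lambda>y. x\<^sup>2 * (std_normal_density y * y ^ (2 * 0)) + 2 * x * (std_normal_density y * y ^ (2 * 0 + 1))
        + std_normal_density y * y ^ (2 * 1))
      (x\<^sup>2 * 1 + 2 * x * 0 + 1)"
    by (intro has_bochner_integral_add has_bochner_integral_mult_right)
  then have "has_bochner_integral lborel (\<lambda>y. std_normal_density y * (x + y)\<^sup>2) (x\<^sup>2 + 1)"
    by (simp add: power2_eq_square algebra_simps)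
  then show ?thesis
    by (subst nn_integral_eq_integral) (auto simp: has_bochner_integral_iff)
qed

lemma prob_space_gauss_pol_std: "prob_space (gauss_pol (0 :: real ^ 'k::finite) 1)"
proof
  show "emeasure (gauss_pol (0 :: real ^ 'k) 1) (space (gauss_pol (0 :: real ^ 'k) 1)) = 1"
    using nn_integral_gauss_pol_std_prod[where f="\<lambda>(_::'k) _. 1"]
    by (simp add: nn_integral_std_normal_density)
qed

lemma nn_integral_gauss_pol_std_shift_sq:
  "(\<integral>\<^sup>+e. ennreal ((x + e $ k)\<^sup>2) \<partial>gauss_pol (0 :: real ^ 'k::finite) 1) = ennreal (x\<^sup>2 + 1)"
proof -
  define f where "f i y = (if i = k then ennreal ((x + y)\<^sup>2) else 1)" for i y
  have int_f: "(\<integral>\<^sup>+y. std_normal_density y * f i y \<partial>lborel) = (if i = k then ennreal (x\<^sup>2 + 1) else 1)" for i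
    by (simp add: f_def ennreal_mult'[symmetric] nn_integral_std_normal_shift_sq nn_integral_std_normal_density)
  have "(\<integral>\<^sup>+e. ennreal ((x + e $ k)\<^sup>2) \<partial>gauss_pol (0 :: real ^ 'k) 1)
      = (\<integral>\<^sup>+e. (\<Prod>i\<in>UNIV. f i (e $ i)) \<partial>gauss_pol (0 :: real ^ 'k) 1)"
    by (simp add: f_def)
  also have "\<dots> = (\<Prod>i\<in>UNIV. \<integral>\<^sup>+y. std_normal_density y * f i y \<partial>lborel)"
    by (rule nn_integral_gauss_pol_std_prod) (simp add: f_def)
  also have "\<dots> = ennreal (x\<^sup>2 + 1)"
    by (simp add: int_f)
  finally show ?thesis .
qed

lemma normal_density_affine:
  assumes "s > 0"
  shows "s * normal_density m s (m + s * x) = std_normal_density x"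
  using assms by (simp add: normal_density_def real_sqrt_mult power_mult_distrib field_simps)

lemma prod_normal_density_affine:
  fixes m s x :: "real ^ 'k::finite"
  assumes s: "\<forall>k. s $ k > 0"
  shows "(\<Prod>b\<in>Basis. \<bar>s \<bullet> b\<bar>) * (\<Prod>k\<in>UNIV. normal_density (m $ k) (s $ k) (m $ k + s $ k * x $ k))
    = (\<Prod>k\<in>UNIV. std_normal_density (x $ k))"
proof -
  have "(\<Prod>b\<in>Basis. \<bar>s \<bullet> b\<bar>) * (\<Prod>k\<in>UNIV. normal_density (m $ k) (s $ k) (m $ k + s $ k * x $ k))
      = (\<Prod>k\<in>UNIV. s $ k * normal_density (m $ k) (s $ k) (m $ k + s $ k * x $ k))"
    using s by (simp add: prod_Basis_vec inner_axis prod.distrib less_imp_le)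
  also have "\<dots> = (\<Prod>k\<in>UNIV. std_normal_density (x $ k))"
    using s by (simp add: normal_density_affine)
  finally show ?thesis .
qed

lemma gauss_pol_eq_distr_std:
  fixes m s :: "real ^ 'k::finite"
  assumes s: "\<forall>k. s $ k > 0"
  shows "gauss_pol m s = distr (gauss_pol 0 1) borel (\<lambda>e. m + s * e)"
proof (rule measure_eqI)
  fix A assume "A \<in> sets (gauss_pol m s)"
  then have A[measurable]: "A \<in> sets borel" by simp
  define T where "T = (\<lambda>x::real ^ 'k. m + s * x)"
  have T[measurable]: "T \<in> borel_measurable borel"
    unfolding T_def by measurable
  have lborel_T: "lborel = density (distr lborel borel T) (\<lambda>_. (\<Prod>b\<in>Basis. \<bar>s \<bullet> b\<bar>))"
    unfolding T_def vec_mult_eq_sum_Basis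
    by (rule lborel_affine_euclidean) (use s in \<open>auto simp: Basis_vec_def inner_axis less_imp_neq[symmetric]\<close>)
  have "emeasure (gauss_pol m s) A
      = (\<integral>\<^sup>+x. ennreal (\<Prod>k\<in>UNIV. normal_density (m $ k) (s $ k) (x $ k)) * indicator A x \<partial>lborel)"
    by (simp add: gauss_pol_def emeasure_density)
  also have "\<dots> = (\<integral>\<^sup>+x. ennreal (\<Prod>k\<in>UNIV. normal_density (m $ k) (s $ k) (x $ k)) * indicator A x
      \<partial>density (distr lborel borel T) (\<lambda>_. (\<Prod>b\<in>Basis. \<bar>s \<bullet> b\<bar>)))"
    using lborel_T by simp
  also have "\<dots> = (\<integral>\<^sup>+x. (\<Prod>b\<in>Basis. \<bar>s \<bullet> b\<bar>)
      * (ennreal (\<Prod>k\<in>UNIV. normal_density (m $ k) (s $ k) (T x $ k)) * indicator A (T x)) \<partial>lborel)"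
    by (simp add: nn_integral_density nn_integral_distr)
  also have "\<dots> = (\<integral>\<^sup>+x. ennreal (\<Prod>k\<in>UNIV. std_normal_density (x $ k)) * indicator (T -` A) x \<partial>lborel)"
  proof (intro nn_integral_cong)
    fix x :: "real ^ 'k"
    from prod_normal_density_affine[OF s, of m x]
    show "ennreal (\<Prod>b\<in>Basis. \<bar>s \<bullet> b\<bar>) * (ennreal (\<Prod>k\<in>UNIV. normal_density (m $ k) (s $ k) (T x $ k)) * indicator A (T x))
        = ennreal (\<Prod>k\<in>UNIV. std_normal_density (x $ k)) * indicator (T -` A) x"
      by (simp add: T_def ennreal_mult'[symmetric] mult.assoc[symmetric] prod_nonneg split: split_indicator)
  qed
  also have "\<dots> = emeasure (distr (gauss_pol 0 1) borel T) A"
    using measurable_sets[OF T A] by (simp add: gauss_pol_def emeasure_distr emeasure_density)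
  finally show "emeasure (gauss_pol m s) A = emeasure (distr (gauss_pol 0 1) borel (\<lambda>e. m + s * e)) A"
    unfolding T_def .
qed simp

lemma gauss_pol_eq_bind_std:
  fixes m s :: "real ^ 'k::finite"
  assumes "\<forall>k. s $ k > 0"
  shows "gauss_pol m s = gauss_pol 0 1 \<bind> (\<lambda>e. return borel (m + s * e))"
  unfolding gauss_pol_eq_distr_std[OF assms]
  by (rule bind_return_distr'[symmetric]) (simp_all add: prob_space.not_empty[OF prob_space_gauss_pol_std])

lemma gauss_pol_std_in_prob_algebra[measurable]:
  "gauss_pol (0 :: real ^ 'k::finite) 1 \<in> space (prob_algebra borel)"
  using prob_space_gauss_pol_std by (simp add: space_prob_algebra)

lemma measurable_gauss_pol:
  assumes [measurable]: "m \<in> M \<rightarrow>\<^sub>M borel" and \<sigma>: "\<forall>k. \<sigma> $ k > 0"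
  shows "(\<lambda>x. gauss_pol (m x) \<sigma>) \<in> M \<rightarrow>\<^sub>M prob_algebra borel"
proof -
  have "(\<lambda>x. distr (gauss_pol 0 1) borel (\<lambda>e. m x + \<sigma> * e)) \<in> M \<rightarrow>\<^sub>M prob_algebra borel"
    by measurable
  then show ?thesis
    by (simp add: gauss_pol_eq_distr_std[OF \<sigma>])
qed

definition traj_step ::
  "'s measure \<Rightarrow> ('s \<Rightarrow> (real ^ 'k) measure) \<Rightarrow> ('s \<Rightarrow> real ^ 'k \<Rightarrow> 's measure) \<Rightarrow> nat
   \<Rightarrow> ('s, 'k::finite) traj \<Rightarrow> ('s, 'k) traj measure" where
  "traj_step SM pol P n = (\<lambda>(s, a). pol (s n) \<bind> (\<lambda>a'. P (s n) a' \<bind> (\<lambda>s'.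
     return (trajM SM (Suc n)) (s(Suc n := s'), a(n := a')))))"

lemma traj_measure_Suc_step:
  "traj_measure SM p0 pol P (Suc n) = traj_measure SM p0 pol P n \<bind> traj_step SM (pol n) P n"
  by (simp add: traj_step_def)

lemma traj_measure_cong:
  "(\<And>i. i < n \<Longrightarrow> pol i = pol' i) \<Longrightarrow> traj_measure SM p0 pol P n = traj_measure SM p0 pol' P n"
  by (induction n) auto

lemma measurable_traj_state:
  "i \<le> n \<Longrightarrow> (\<lambda>\<tau>. fst \<tau> i) \<in> trajM SM n \<rightarrow>\<^sub>M SM"
  unfolding trajM_def by measurable

lemma measurable_traj_action:
  "i < n \<Longrightarrow> (\<lambda>\<tau>. snd \<tau> i) \<in> (trajM SM n :: ('s, 'k::finite) traj measure) \<rightarrow>\<^sub>M borel"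
  unfolding trajM_def by measurable

lemma pred_traj_action_eq:
  fixes a :: "'s \<Rightarrow> real ^ 'k::finite"
  assumes "i < n" and "a \<in> SM \<rightarrow>\<^sub>M borel"
  shows "Measurable.pred (trajM SM n) (\<lambda>\<tau>. snd \<tau> i = a (fst \<tau> i))"
proof -
  have "(\<lambda>\<tau>. snd \<tau> i) \<in> (trajM SM n :: ('s, 'k) traj measure) \<rightarrow>\<^sub>M borel"
    using assms(1) by (rule measurable_traj_action)
  moreover have "(\<lambda>\<tau>. a (fst \<tau> i)) \<in> (trajM SM n :: ('s, 'k) traj measure) \<rightarrow>\<^sub>M borel"
    by (rule measurable_compose[OF measurable_traj_state assms(2)]) (use assms(1) in simp)
  ultimately show ?thesis
    unfolding pred_def by (rule measurable_equality_set)
qed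

lemma pred_traj_actions_eq:
  fixes a :: "nat \<Rightarrow> 's \<Rightarrow> real ^ 'k::finite"
  assumes "\<And>i. a i \<in> SM \<rightarrow>\<^sub>M borel"
  shows "Measurable.pred (trajM SM n) (\<lambda>\<tau>. \<forall>i<n. snd \<tau> i = a i (fst \<tau> i))"
proof -
  have eq: "(\<lambda>\<tau>. \<forall>i<n. snd \<tau> i = a i (fst \<tau> i)) = (\<lambda>\<tau>. \<forall>i\<in>{..<n}. snd \<tau> i = a i (fst \<tau> i))"
    by blast
  show ?thesis
    unfolding eq
  proof (rule pred_intros_finite(3))
    fix i assume "i \<in> {..<n}"
    then show "Measurable.pred (trajM SM n) (\<lambda>\<tau>. snd \<tau> i = a i (fst \<tau> i))"
      using assms by (intro pred_traj_action_eq) auto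
  qed simp
qed

lemma measurable_traj_step_param:
  assumes [measurable]: "(\<lambda>(x, s). pol x s) \<in> X \<Otimes>\<^sub>M SM \<rightarrow>\<^sub>M prob_algebra borel"
    and [measurable]: "(\<lambda>(s, a). P s a) \<in> SM \<Otimes>\<^sub>M borel \<rightarrow>\<^sub>M prob_algebra SM"
  shows "(\<lambda>(x, \<tau>). traj_step SM (pol x) P n \<tau>)
    \<in> X \<Otimes>\<^sub>M (trajM SM n :: ('s, 'k::finite) traj measure) \<rightarrow>\<^sub>M prob_algebra (trajM SM (Suc n))"
  unfolding traj_step_def split_beta' trajM_def by measurable

lemma measurable_traj_step:
  assumes [measurable]: "pol \<in> SM \<rightarrow>\<^sub>M prob_algebra borel"
    and [measurable]: "(\<lambda>(s, a). P s a) \<in> SM \<Otimes>\<^sub>M borel \<rightarrow>\<^sub>M prob_algebra SM"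
  shows "traj_step SM pol P n
    \<in> (trajM SM n :: ('s, 'k::finite) traj measure) \<rightarrow>\<^sub>M prob_algebra (trajM SM (Suc n))"
  unfolding traj_step_def split_beta' trajM_def by measurable

lemma measurable_traj_transition:
  assumes [measurable]: "(\<lambda>(s, a). P s a) \<in> SM \<Otimes>\<^sub>M borel \<rightarrow>\<^sub>M prob_algebra SM"
    and \<tau>: "\<tau> \<in> space (trajM SM n :: ('s, 'k::finite) traj measure)"
  shows "(\<lambda>a. P (fst \<tau> n) a \<bind> (\<lambda>s'. return (trajM SM (Suc n)) ((fst \<tau>)(Suc n := s'), (snd \<tau>)(n := a))))
    \<in> borel \<rightarrow>\<^sub>M prob_algebra (trajM SM (Suc n))"
proof -
  have [measurable]: "fst \<tau> n \<in> space SM" "fst \<tau> \<in> space (Pi\<^sub>M {..n} (\<lambda>_. SM))"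
    "snd \<tau> \<in> space (Pi\<^sub>M {..<n} (\<lambda>_. borel :: (real ^ 'k) measure))"
    using \<tau> by (auto simp: trajM_def space_pair_measure space_PiM)
  show ?thesis
    unfolding trajM_def by measurable
qed

lemma measurable_traj_measure:
  assumes pol: "\<And>i. (\<lambda>(x, s). pol x i s) \<in> X \<Otimes>\<^sub>M SM \<rightarrow>\<^sub>M prob_algebra borel"
    and P: "(\<lambda>(s, a). P s a) \<in> SM \<Otimes>\<^sub>M borel \<rightarrow>\<^sub>M prob_algebra SM"
    and p0: "prob_space p0" "sets p0 = sets SM"
  shows "(\<lambda>x. traj_measure SM p0 (pol x) P n)
    \<in> X \<rightarrow>\<^sub>M prob_algebra (trajM SM n :: ('s, 'k::finite) traj measure)"
proof (induction n)
  case 0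
  have "(\<lambda>s0. (\<lambda>i\<in>{..0}. s0, \<lambda>i\<in>{..<0}. undefined)) \<in> p0 \<rightarrow>\<^sub>M (trajM SM 0 :: ('s, 'k) traj measure)"
    unfolding trajM_def measurable_cong_sets[OF p0(2) refl] by measurable
  from prob_space.prob_space_distr[OF p0(1) this] show ?case
    by (simp add: space_prob_algebra)
next
  case (Suc n)
  show ?case
    unfolding traj_measure_Suc_step
    by (rule measurable_bind_prob_space2[OF Suc.IH measurable_traj_step_param[OF pol P]])
qed

lemma traj_measure_in_prob_algebra:
  assumes [measurable]: "\<And>i. pol i \<in> SM \<rightarrow>\<^sub>M prob_algebra borel"
    and P: "(\<lambda>(s, a). P s a) \<in> SM \<Otimes>\<^sub>M borel \<rightarrow>\<^sub>M prob_algebra SM"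
    and p0: "prob_space p0" "sets p0 = sets SM"
  shows "traj_measure SM p0 pol P n \<in> space (prob_algebra (trajM SM n :: ('s, 'k::finite) traj measure))"
proof -
  have "(\<lambda>_::unit. traj_measure SM p0 pol P n) \<in> count_space UNIV \<rightarrow>\<^sub>M prob_algebra (trajM SM n)"
    by (rule measurable_traj_measure[OF _ P p0]) measurable
  then show ?thesis
    by (rule measurable_space) simp
qed

lemma AE_traj_step_return:
  assumes P: "(\<lambda>(s, a). P s a) \<in> SM \<Otimes>\<^sub>M borel \<rightarrow>\<^sub>M prob_algebra SM"
    and \<tau>: "\<tau> \<in> space (trajM SM n :: ('s, 'k::finite) traj measure)"
    and Q[measurable]: "Measurable.pred (trajM SM (Suc n)) Q"
    and Q_next: "\<And>s'. s' \<in> space SM \<Longrightarrow> Q ((fst \<tau>)(Suc n := s'), (snd \<tau>)(n := a (fst \<tau> n)))"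
  shows "AE \<tau>' in traj_step SM (\<lambda>s. return borel (a s)) P n \<tau>. Q \<tau>'"
proof -
  obtain s as where \<tau>_eq: "\<tau> = (s, as)" by fastforce
  let ?upd = "\<lambda>s'. (s(Suc n := s'), as(n := a (s n)))"
  have s_n: "s n \<in> space SM" and upd[measurable]: "?upd \<in> SM \<rightarrow>\<^sub>M trajM SM (Suc n)"
    using \<tau> by (auto simp: \<tau>_eq trajM_def space_pair_measure space_PiM)
  have "P (s n) (a (s n)) \<in> space (prob_algebra SM)"
    using measurable_space[OF P, of "(s n, a (s n))"] s_n by (simp add: space_pair_measure)
  then have sets_P: "sets (P (s n) (a (s n))) = sets SM"
    by (simp add: space_prob_algebra)
  have "traj_step SM (\<lambda>s. return borel (a s)) P n \<tau> = P (s n) (a (s n)) \<bind> (\<lambda>s'. return (trajM SM (Suc n)) (?upd s'))"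
    unfolding traj_step_def \<tau>_eq split
    by (rule bind_return[OF measurable_prob_algebraD[OF measurable_traj_transition[OF P \<tau>, unfolded \<tau>_eq fst_conv snd_conv]]]) simp
  also have "AE \<tau>' in \<dots>. Q \<tau>'"
  proof (subst AE_bind)
    show "(\<lambda>s'. return (trajM SM (Suc n)) (?upd s')) \<in> P (s n) (a (s n)) \<rightarrow>\<^sub>M subprob_algebra (trajM SM (Suc n))"
      unfolding measurable_cong_sets[OF sets_P refl] by measurable
    show "AE s' in P (s n) (a (s n)). AE \<tau>' in return (trajM SM (Suc n)) (?upd s'). Q \<tau>'"
      using Q_next measurable_space[OF upd] sets_eq_imp_space_eq[OF sets_P]
      by (auto simp: \<tau>_eq AE_return)
  qed simp
  finally show ?thesis .
qed

lemma AE_traj_measure_return_actions: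
  assumes [measurable]: "\<And>i. a i \<in> SM \<rightarrow>\<^sub>M borel"
    and P: "(\<lambda>(s, a). P s a) \<in> SM \<Otimes>\<^sub>M borel \<rightarrow>\<^sub>M prob_algebra SM"
    and p0: "prob_space p0" "sets p0 = sets SM"
  shows "AE \<tau> in traj_measure SM p0 (\<lambda>i s. return borel (a i s)) P n.
    \<forall>i<n. snd \<tau> i = (a i (fst \<tau> i) :: real ^ 'k::finite)"
proof (induction n)
  case (Suc n)
  let ?D = "traj_measure SM p0 (\<lambda>i s. return borel (a i s)) P n"
  let ?K = "traj_step SM (\<lambda>s. return borel (a n s)) P n"
  have "?D \<in> space (prob_algebra (trajM SM n))"
    by (rule traj_measure_in_prob_algebra[OF _ P p0]) measurable
  then have sets_D: "sets ?D = sets (trajM SM n)"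
    by (simp add: space_prob_algebra)
  have K: "?K \<in> ?D \<rightarrow>\<^sub>M subprob_algebra (trajM SM (Suc n))"
    unfolding measurable_cong_sets[OF sets_D refl]
    by (rule measurable_prob_algebraD[OF measurable_traj_step[OF _ P]]) measurable
  note Q = pred_traj_actions_eq[of a SM "Suc n", OF assms(1)]
  have "AE \<tau> in ?D. AE \<tau>' in ?K \<tau>. \<forall>i<Suc n. snd \<tau>' i = a i (fst \<tau>' i)"
    using Suc.IH AE_space
  proof eventually_elim
    case (elim \<tau>)
    show ?case
    proof (rule AE_traj_step_return[OF P _ Q])
      show "\<tau> \<in> space (trajM SM n)"
        using elim(2) sets_eq_imp_space_eq[OF sets_D] by simp
      show "\<forall>i<Suc n. snd ((fst \<tau>)(Suc n := s'), (snd \<tau>)(n := a n (fst \<tau> n))) i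
          = a i (fst ((fst \<tau>)(Suc n := s'), (snd \<tau>)(n := a n (fst \<tau> n))) i)" for s'
        using elim(1) by (simp add: less_Suc_eq)
    qed
  qed
  then show ?case
    unfolding traj_measure_Suc_step AE_bind[OF K Q] .
qed simp

section \<open>The score of the bias parameters\<close>

(* The derivative of the log-likelihood of tau under the policy N(m(s), diag sigma^2) with
   respect to a shift of the mean in coordinate k. *)
definition bias_score :: "('s \<Rightarrow> real ^ 'k) \<Rightarrow> real ^ 'k \<Rightarrow> 'k \<Rightarrow> nat \<Rightarrow> ('s, 'k::finite) traj \<Rightarrow> real"
  where "bias_score m \<sigma> k n \<tau> = (\<Sum>i<n. (snd \<tau> i $ k - m (fst \<tau> i) $ k) / (\<sigma> $ k)\<^sup>2)"

lemma measurable_bias_score: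
  assumes "m \<in> SM \<rightarrow>\<^sub>M borel"
  shows "bias_score m \<sigma> k n \<in> borel_measurable (trajM SM n)"
proof -
  have "(\<lambda>\<tau>. (snd \<tau> i $ k - m (fst \<tau> i) $ k) / (\<sigma> $ k)\<^sup>2) \<in> borel_measurable (trajM SM n)" if "i < n" for i
  proof -
    have [measurable]: "(\<lambda>\<tau>. snd \<tau> i) \<in> borel_measurable (trajM SM n)"
      "(\<lambda>\<tau>. m (fst \<tau> i)) \<in> borel_measurable (trajM SM n)"
      using that by (simp_all add: measurable_traj_action measurable_compose[OF measurable_traj_state assms])
    show ?thesis
      by measurable
  qed
  then show ?thesis
    unfolding bias_score_def[abs_def] by (intro borel_measurable_sum) auto
qed

lemma AE_bias_score_return_noise:
  assumes [measurable]: "m \<in> SM \<rightarrow>\<^sub>M borel" and "\<sigma> $ k \<noteq> 0"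
    and P: "(\<lambda>(s, a). P s a) \<in> SM \<Otimes>\<^sub>M borel \<rightarrow>\<^sub>M prob_algebra SM"
    and p0: "prob_space p0" "sets p0 = sets SM"
  shows "AE \<tau> in traj_measure SM p0 (\<lambda>i s. return borel (m s + \<sigma> * \<epsilon> i)) P n.
    bias_score m \<sigma> k n \<tau> = (\<Sum>i<n. \<epsilon> i $ k) / \<sigma> $ k"
proof -
  have "AE \<tau> in traj_measure SM p0 (\<lambda>i s. return borel (m s + \<sigma> * \<epsilon> i)) P n.
      \<forall>i<n. snd \<tau> i = m (fst \<tau> i) + \<sigma> * \<epsilon> i"
    by (rule AE_traj_measure_return_actions[OF _ P p0]) measurable
  then show ?thesis
  proof eventually_elim
    case (elim \<tau>)
    then show ?case
      using \<open>\<sigma> $ k \<noteq> 0\<close> by (simp add: bias_score_def sum_divide_distrib power2_eq_square)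
  qed
qed

lemma grad_eqI:
  assumes "GDERIV f x :> D"
  shows "grad f x = D"
  unfolding grad_def
proof (rule the_equality)
  fix D' assume "GDERIV f x :> D'"
  then have "(\<lambda>h. h \<bullet> D') = (\<lambda>h. h \<bullet> D)"
    using assms unfolding gderiv_def by (rule has_derivative_unique)
  then have "(D' - D) \<bullet> D' = (D' - D) \<bullet> D"
    by metis
  then have "(D' - D) \<bullet> (D' - D) = 0"
    by (simp add: inner_diff_right)
  then show "D' = D"
    by simp
qed (rule assms)

lemma has_derivative_imp_gderiv:
  fixes f :: "'a::euclidean_space \<Rightarrow> real"
  assumes "(f has_derivative F) (at x)"
  shows "GDERIV f x :> (\<Sum>b\<in>Basis. F b *\<^sub>R b)"
proof -
  have "linear F"
    using assms by (rule has_derivative_linear)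
  then have "F h = h \<bullet> (\<Sum>b\<in>Basis. F b *\<^sub>R b)" for h
    using Linear_Algebra.linear_componentwise[of F h 1] by (simp add: inner_sum_right mult.commute)
  then have "F = (\<lambda>h. h \<bullet> (\<Sum>b\<in>Basis. F b *\<^sub>R b))"
    by (rule ext)
  with assms show ?thesis
    unfolding gderiv_def by metis
qed

lemma grad_inner_eq_directional_deriv:
  fixes f :: "'a::euclidean_space \<Rightarrow> real"
  assumes "f differentiable (at x)"
    and "((\<lambda>t. f (x + t *\<^sub>R v)) has_real_derivative d) (at 0)"
  shows "grad f x \<bullet> v = d"
proof -
  obtain F where F: "(f has_derivative F) (at x)"
    using assms(1) unfolding differentiable_def by blast
  define D where "D = (\<Sum>b\<in>Basis. F b *\<^sub>R b)"
  have "GDERIV f x :> D"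
    unfolding D_def using F by (rule has_derivative_imp_gderiv)
  then have grad: "grad f x = D" and FD: "(f has_derivative (\<lambda>h. h \<bullet> D)) (at x)"
    by (simp_all add: grad_eqI gderiv_def)
  have "((\<lambda>t. x + t *\<^sub>R v) has_derivative (\<lambda>t. t *\<^sub>R v)) (at 0)"
    by (auto intro!: derivative_eq_intros)
  from diff_chain_at[OF this, of f "\<lambda>h. h \<bullet> D"] FD
  have "((\<lambda>t. f (x + t *\<^sub>R v)) has_derivative (\<lambda>t. t * (v \<bullet> D))) (at 0)"
    by (simp add: o_def)
  then have "((\<lambda>t. f (x + t *\<^sub>R v)) has_real_derivative v \<bullet> D) (at 0)"
    by (simp add: has_field_derivative_def mult_commute_abs)
  then show ?thesis
    using assms(2) grad by (simp add: inner_commute DERIV_unique)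
qed

lemma ln_normal_density:
  assumes "s > 0"
  shows "ln (normal_density m s x) = - ln (sqrt (2 * pi)) - ln s - (x - m)\<^sup>2 / (2 * s\<^sup>2)"
  using assms by (simp add: normal_density_def ln_mult ln_div real_sqrt_mult)

lemma log_pi_differentiable:
  fixes mu' :: "real ^ 'p::finite \<Rightarrow> 's \<Rightarrow> real ^ 'k::finite"
  assumes mu': "(\<lambda>p. mu' p s) differentiable (at \<theta>p)" and \<sigma>: "\<forall>k. \<sigma> $ k > 0"
  shows "(\<lambda>\<theta>. log_pi mu' \<theta> s a) differentiable (at (\<theta>p, b, \<sigma>))"
proof -
  define U where "U = {\<theta> :: (real ^ 'p) \<times> (real ^ 'k) \<times> (real ^ 'k). \<forall>k. snd (snd \<theta>) $ k > 0}"
  define f where "f \<theta> = (\<Sum>k\<in>UNIV. - ln (sqrt (2 * pi)) - ln (snd (snd \<theta>) $ k)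
      - (a $ k - (mu' (fst \<theta>) s + fst (snd \<theta>)) $ k)\<^sup>2 / (2 * (snd (snd \<theta>) $ k)\<^sup>2))" for \<theta>
  have "U = (\<Inter>k. (\<lambda>\<theta>. snd (snd \<theta>) $ k) -` {0<..})"
    by (auto simp: U_def)
  also have "open \<dots>"
    by (intro open_INT finite_UNIV ballI open_vimage continuous_intros) auto
  finally have "open U" .
  have f_eq: "f \<theta> = log_pi mu' \<theta> s a" if "\<theta> \<in> U" for \<theta>
    using that by (cases \<theta>) (auto simp: U_def f_def log_pi_def ln_normal_density intro!: sum.cong)
  let ?x = "(\<theta>p, b, \<sigma>)"
  have \<sigma>': "(\<lambda>\<theta>::(real ^ 'p) \<times> (real ^ 'k) \<times> (real ^ 'k). snd (snd \<theta>) $ k) differentiable (at ?x)" for k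
    by (intro bounded_linear_imp_differentiable bounded_linear_compose[OF bounded_linear_vec_nth]
        bounded_linear_compose[OF bounded_linear_snd] bounded_linear_snd)
  have "(\<lambda>\<theta>::(real ^ 'p) \<times> (real ^ 'k) \<times> (real ^ 'k). mu' (fst \<theta>) s + fst (snd \<theta>)) differentiable (at ?x)"
    using differentiable_compose[of "\<lambda>p. mu' p s" fst ?x UNIV] mu'
    by (intro differentiable_add)
       (simp_all add: bounded_linear_imp_differentiable bounded_linear_fst bounded_linear_snd
         bounded_linear_compose[OF bounded_linear_fst])
  then have mean: "(\<lambda>\<theta>::(real ^ 'p) \<times> (real ^ 'k) \<times> (real ^ 'k). (mu' (fst \<theta>) s + fst (snd \<theta>)) $ k)
      differentiable (at ?x)" for k
    using differentiable_compose[OF bounded_linear_imp_differentiable[OF bounded_linear_vec_nth]]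
    by blast
  have ln_diff: "ln differentiable (at (\<sigma> $ k))" for k
    using DERIV_ln[of "\<sigma> $ k"] \<sigma> unfolding has_field_derivative_def differentiable_def by auto
  have log_\<sigma>: "(\<lambda>\<theta>::(real ^ 'p) \<times> (real ^ 'k) \<times> (real ^ 'k). ln (snd (snd \<theta>) $ k)) differentiable (at ?x)" for k
    using differentiable_compose[of ln "\<lambda>\<theta>. snd (snd \<theta>) $ k" ?x UNIV] ln_diff \<sigma>' by simp
  have "f differentiable (at ?x)"
    unfolding f_def using \<sigma> \<sigma>' mean log_\<sigma>
    by (intro differentiable_sum ballI finite_UNIV differentiable_diff differentiable_const
        differentiable_divide differentiable_power differentiable_mult) (auto simp: less_imp_neq[symmetric])
  then obtain F where "(f has_derivative F) (at ?x)"
    unfolding differentiable_def by blast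
  from has_derivative_transform_within_open[OF this \<open>open U\<close> _ f_eq] \<sigma>
  show ?thesis
    unfolding differentiable_def by (auto simp: U_def)
qed

lemma has_real_derivative_log_pi_bias:
  assumes \<sigma>: "\<forall>k. \<sigma> $ k > 0"
  shows "((\<lambda>t. log_pi mu' ((\<theta>p, b, \<sigma>) + t *\<^sub>R (0, axis k 1, 0)) s a)
    has_real_derivative (a $ k - (mu' \<theta>p s + b) $ k) / (\<sigma> $ k)\<^sup>2) (at 0)"
proof -
  define \<mu> where "\<mu> = mu' \<theta>p s + b"
  have eq: "log_pi mu' ((\<theta>p, b, \<sigma>) + t *\<^sub>R (0, axis k 1, 0)) s a
      = (\<Sum>i\<in>UNIV. - ln (sqrt (2 * pi)) - ln (\<sigma> $ i)
          - (a $ i - \<mu> $ i - t * (if i = k then 1 else 0))\<^sup>2 / (2 * (\<sigma> $ i)\<^sup>2))" for t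
    using \<sigma> by (auto simp: log_pi_def ln_normal_density \<mu>_def axis_def algebra_simps intro!: sum.cong)
  have "((\<lambda>t. \<Sum>i\<in>UNIV. - ln (sqrt (2 * pi)) - ln (\<sigma> $ i)
      - (a $ i - \<mu> $ i - t * (if i = k then 1 else 0))\<^sup>2 / (2 * (\<sigma> $ i)\<^sup>2))
      has_real_derivative (\<Sum>i\<in>UNIV. if i = k then (a $ k - \<mu> $ k) / (\<sigma> $ k)\<^sup>2 else 0)) (at 0)"
  proof (rule DERIV_sum)
    fix i
    show "((\<lambda>t. - ln (sqrt (2 * pi)) - ln (\<sigma> $ i)
        - (a $ i - \<mu> $ i - t * (if i = k then 1 else 0))\<^sup>2 / (2 * (\<sigma> $ i)\<^sup>2))
        has_real_derivative (if i = k then (a $ k - \<mu> $ k) / (\<sigma> $ k)\<^sup>2 else 0)) (at 0)"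
      using \<sigma>[rule_format, of i]
      by (cases "i = k") (auto intro!: derivative_eq_intros simp: power2_eq_square field_simps)
  qed
  then show ?thesis
    unfolding eq \<mu>_def[symmetric] by simp
qed

lemma grad_log_pi_bias:
  fixes mu' :: "real ^ 'p::finite \<Rightarrow> 's \<Rightarrow> real ^ 'k::finite"
  assumes "(\<lambda>p. mu' p s) differentiable (at \<theta>p)" and "\<forall>k. \<sigma> $ k > 0"
  shows "grad (\<lambda>\<theta>. log_pi mu' \<theta> s a) (\<theta>p, b, \<sigma>) \<bullet> (0, axis k 1, 0)
    = (a $ k - (mu' \<theta>p s + b) $ k) / (\<sigma> $ k)\<^sup>2"
proof (rule grad_inner_eq_directional_deriv)
  show "(\<lambda>\<theta>. log_pi mu' \<theta> s a) differentiable (at (\<theta>p, b, \<sigma>))"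
    using assms by (rule log_pi_differentiable)
  show "((\<lambda>t. log_pi mu' ((\<theta>p, b, \<sigma>) + t *\<^sub>R (0, axis k 1, 0)) s a)
      has_real_derivative (a $ k - (mu' \<theta>p s + b) $ k) / (\<sigma> $ k)\<^sup>2) (at 0)"
    using assms(2) by (rule has_real_derivative_log_pi_bias)
qed

lemma pg_estimator_inner_bias:
  fixes mu' :: "real ^ 'p::finite \<Rightarrow> 's \<Rightarrow> real ^ 'k::finite"
  assumes "\<And>i. i < N \<Longrightarrow> (\<lambda>p. mu' p (fst \<tau> i)) differentiable (at \<theta>p)" and "\<forall>k. \<sigma> $ k > 0"
  shows "pg_estimator mu' (\<theta>p, b, \<sigma>) N R \<tau> \<bullet> (0, axis k 1, 0) = R \<tau> * bias_score (\<lambda>s. mu' \<theta>p s + b) \<sigma> k N \<tau>"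
  using assms by (simp add: pg_estimator_def bias_score_def inner_sum_left grad_log_pi_bias)

section \<open>Reparameterization of the actions\<close>

definition noise_space :: "(nat \<Rightarrow> real ^ 'k::finite) measure" where
  "noise_space = Pi\<^sub>M UNIV (\<lambda>_. borel)"

lemma space_noise_space[simp]: "space noise_space = UNIV"
  by (simp add: noise_space_def space_PiM)

lemma measurable_noise_component[measurable]: "(\<lambda>\<epsilon>. \<epsilon> i) \<in> noise_space \<rightarrow>\<^sub>M borel"
  unfolding noise_space_def by measurable

lemma measurable_noise_step:
  "(\<lambda>\<epsilon>. gauss_pol 0 1 \<bind> (\<lambda>e. return noise_space (\<epsilon>(n := e))))
    \<in> (noise_space :: (nat \<Rightarrow> real ^ 'k::finite) measure) \<rightarrow>\<^sub>M prob_algebra noise_space"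
  unfolding noise_space_def by measurable

lemma measurable_return_noise_update:
  "(\<lambda>e. return noise_space (\<epsilon>(n := e)))
    \<in> gauss_pol 0 1 \<rightarrow>\<^sub>M subprob_algebra (noise_space :: (nat \<Rightarrow> real ^ 'k::finite) measure)"
  unfolding measurable_cong_sets[OF sets_gauss_pol refl] noise_space_def
  by measurable (simp_all add: space_PiM measurable_ident_sets)

(* The law of the reparameterization noise eps_0, ..., eps_(n-1); the remaining coordinates are 0. *)
fun noise_measure :: "nat \<Rightarrow> (nat \<Rightarrow> real ^ 'k::finite) measure" where
  "noise_measure 0 = return noise_space (\<lambda>_. 0)"
| "noise_measure (Suc n) =
     noise_measure n \<bind> (\<lambda>\<epsilon>. gauss_pol 0 1 \<bind> (\<lambda>e. return noise_space (\<epsilon>(n := e))))"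

lemma noise_measure_in_prob_algebra: "noise_measure n \<in> space (prob_algebra noise_space)"
proof (induction n)
  case (Suc n)
  show ?case
    using prob_space_bind'[OF Suc measurable_noise_step] sets_bind'[OF Suc measurable_noise_step]
    by (simp add: space_prob_algebra)
qed (simp add: space_prob_algebra prob_space_return)

lemma sets_noise_measure[measurable_cong]: "sets (noise_measure n) = sets noise_space"
  using noise_measure_in_prob_algebra[of n] unfolding space_prob_algebra by blast

lemma prob_space_noise_measure: "prob_space (noise_measure n)"
  using noise_measure_in_prob_algebra[of n] unfolding space_prob_algebra by blast

lemma measurable_noise_step_subprob:
  "(\<lambda>\<epsilon>. gauss_pol 0 1 \<bind> (\<lambda>e. return noise_space (\<epsilon>(n := e))))
    \<in> noise_measure n \<rightarrow>\<^sub>M subprob_algebra (noise_space :: (nat \<Rightarrow> real ^ 'k::finite) measure)"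
  unfolding measurable_cong_sets[OF sets_noise_measure refl]
  by (rule measurable_prob_algebraD[OF measurable_noise_step])

lemma bind_noise_measure_Suc:
  fixes D :: "(nat \<Rightarrow> real ^ 'k::finite) \<Rightarrow> 'a measure"
  assumes D: "D \<in> noise_space \<rightarrow>\<^sub>M subprob_algebra M"
  shows "noise_measure (Suc n) \<bind> D = noise_measure n \<bind> (\<lambda>\<epsilon>. gauss_pol 0 1 \<bind> (\<lambda>e. D (\<epsilon>(n := e))))"
proof -
  have "(gauss_pol 0 1 \<bind> (\<lambda>e. return noise_space (\<epsilon>(n := e)))) \<bind> D = gauss_pol 0 1 \<bind> (\<lambda>e. D (\<epsilon>(n := e)))"
    for \<epsilon> :: "nat \<Rightarrow> real ^ 'k"
    by (simp add: bind_assoc[OF measurable_return_noise_update D] bind_return[OF D])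
  then show ?thesis
    by (simp add: bind_assoc[OF measurable_noise_step_subprob D])
qed

lemma nn_integral_noise_measure_Suc:
  fixes f :: "(nat \<Rightarrow> real ^ 'k::finite) \<Rightarrow> ennreal"
  assumes [measurable]: "f \<in> borel_measurable noise_space"
  shows "(\<integral>\<^sup>+\<epsilon>. f \<epsilon> \<partial>noise_measure (Suc n))
    = (\<integral>\<^sup>+\<epsilon>. \<integral>\<^sup>+e. f (\<epsilon>(n := e)) \<partial>gauss_pol 0 1 \<partial>noise_measure n)"
proof -
  have "(\<integral>\<^sup>+\<epsilon>'. f \<epsilon>' \<partial>(gauss_pol 0 1 \<bind> (\<lambda>e. return noise_space (\<epsilon>(n := e)))))
      = (\<integral>\<^sup>+e. f (\<epsilon>(n := e)) \<partial>gauss_pol 0 1)" for \<epsilon> :: "nat \<Rightarrow> real ^ 'k"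
    by (simp add: nn_integral_bind[OF _ measurable_return_noise_update] nn_integral_return)
  then show ?thesis
    by (simp add: nn_integral_bind[OF _ measurable_noise_step_subprob])
qed

lemma nn_integral_noise_measure_sum_sq:
  fixes k :: "'k::finite"
  shows "(\<integral>\<^sup>+\<epsilon>. ennreal ((x + (\<Sum>i<n. \<epsilon> i $ k))\<^sup>2) \<partial>noise_measure n) = ennreal (x\<^sup>2 + real n)"
proof (induction n)
  case 0
  have "UNIV \<in> sets (noise_space :: (nat \<Rightarrow> real ^ 'k) measure)"
    using sets.top[of noise_space] by simp
  then show ?case
    by (simp add: emeasure_return)
next
  case (Suc n)
  have "(\<integral>\<^sup>+\<epsilon>. ennreal ((x + (\<Sum>i<Suc n. \<epsilon> i $ k))\<^sup>2) \<partial>noise_measure (Suc n))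
      = (\<integral>\<^sup>+\<epsilon>. \<integral>\<^sup>+e. ennreal (((x + (\<Sum>i<n. \<epsilon> i $ k)) + e $ k)\<^sup>2) \<partial>gauss_pol 0 1 \<partial>noise_measure n)"
    by (subst nn_integral_noise_measure_Suc) (measurable, simp add: add.assoc)
  also have "\<dots> = (\<integral>\<^sup>+\<epsilon>. ennreal ((x + (\<Sum>i<n. \<epsilon> i $ k))\<^sup>2) + 1 \<partial>noise_measure n)"
    by (simp add: nn_integral_gauss_pol_std_shift_sq ennreal_plus)
  also have "\<dots> = ennreal (x\<^sup>2 + real n) + 1"
    using prob_space.emeasure_space_1[OF prob_space_noise_measure]
    by (simp add: nn_integral_add Suc.IH)
  also have "\<dots> = ennreal (x\<^sup>2 + real n + 1)"
    by (subst ennreal_plus) auto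
  finally show ?case
    by (simp add: ac_simps)
qed

lemma traj_step_gauss_pol_eq_bind:
  assumes \<sigma>: "\<forall>k. \<sigma> $ k > 0"
    and P: "(\<lambda>(s, a). P s a) \<in> SM \<Otimes>\<^sub>M borel \<rightarrow>\<^sub>M prob_algebra SM"
    and \<tau>: "\<tau> \<in> space (trajM SM n :: ('s, 'k::finite) traj measure)"
  shows "traj_step SM (\<lambda>s. gauss_pol (m s) \<sigma>) P n \<tau>
    = gauss_pol 0 1 \<bind> (\<lambda>e. traj_step SM (\<lambda>s. return borel (m s + \<sigma> * e)) P n \<tau>)"
proof -
  let ?F = "\<lambda>a. P (fst \<tau> n) a \<bind> (\<lambda>s'. return (trajM SM (Suc n)) ((fst \<tau>)(Suc n := s'), (snd \<tau>)(n := a)))"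
  have ret: "(\<lambda>e. return borel (m (fst \<tau> n) + \<sigma> * e)) \<in> gauss_pol 0 1 \<rightarrow>\<^sub>M subprob_algebra borel"
    unfolding measurable_cong_sets[OF sets_gauss_pol refl] by measurable
  have "traj_step SM (\<lambda>s. gauss_pol (m s) \<sigma>) P n \<tau>
      = (gauss_pol 0 1 \<bind> (\<lambda>e. return borel (m (fst \<tau> n) + \<sigma> * e))) \<bind> ?F"
    by (simp add: traj_step_def split_beta gauss_pol_eq_bind_std[OF \<sigma>])
  also have "\<dots> = gauss_pol 0 1 \<bind> (\<lambda>e. return borel (m (fst \<tau> n) + \<sigma> * e) \<bind> ?F)"
    by (rule bind_assoc[OF ret measurable_prob_algebraD[OF measurable_traj_transition[OF P \<tau>]]])
  finally show ?thesis
    by (simp add: traj_step_def split_beta)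
qed

lemma measurable_traj_measure_noise:
  assumes [measurable]: "m \<in> SM \<rightarrow>\<^sub>M borel"
    and P: "(\<lambda>(s, a). P s a) \<in> SM \<Otimes>\<^sub>M borel \<rightarrow>\<^sub>M prob_algebra SM"
    and p0: "prob_space p0" "sets p0 = sets SM"
  shows "(\<lambda>\<epsilon>. traj_measure SM p0 (\<lambda>i s. return borel (m s + \<sigma> * \<epsilon> i)) P n)
    \<in> noise_space \<rightarrow>\<^sub>M prob_algebra (trajM SM n :: ('s, 'k::finite) traj measure)"
  by (rule measurable_traj_measure[OF _ P p0]) measurable

lemma traj_measure_noise_bind_gauss_step:
  fixes SM :: "'s measure" and \<sigma> :: "real ^ 'k::finite"
  assumes [measurable]: "m \<in> SM \<rightarrow>\<^sub>M borel" and \<sigma>: "\<forall>k. \<sigma> $ k > 0"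
    and P: "(\<lambda>(s, a). P s a) \<in> SM \<Otimes>\<^sub>M borel \<rightarrow>\<^sub>M prob_algebra SM"
    and p0: "prob_space p0" "sets p0 = sets SM"
  shows "traj_measure SM p0 (\<lambda>i s. return borel (m s + \<sigma> * \<epsilon> i)) P n
      \<bind> traj_step SM (\<lambda>s. gauss_pol (m s) \<sigma>) P n
    = gauss_pol 0 1 \<bind> (\<lambda>e. traj_measure SM p0 (\<lambda>i s. return borel (m s + \<sigma> * (\<epsilon>(n := e)) i)) P (Suc n))"
proof -
  define D where "D = traj_measure SM p0 (\<lambda>i s. return borel (m s + \<sigma> * \<epsilon> i)) P n"
  define K where "K e = traj_step SM (\<lambda>s. return borel (m s + \<sigma> * e)) P n" for e
  have "D \<in> space (prob_algebra (trajM SM n))"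
    unfolding D_def by (rule traj_measure_in_prob_algebra[OF _ P p0]) measurable
  then have sets_D: "sets D = sets (trajM SM n)" and "prob_space D"
    by (simp_all add: space_prob_algebra)
  then interpret pair_prob_space "gauss_pol (0 :: real ^ 'k) 1" D
    by (simp add: pair_prob_space_def pair_sigma_finite_def prob_space_gauss_pol_std prob_space_imp_sigma_finite)
  have "(\<lambda>(e, \<tau>). K e \<tau>) \<in> borel \<Otimes>\<^sub>M trajM SM n \<rightarrow>\<^sub>M prob_algebra (trajM SM (Suc n))"
    unfolding K_def by (rule measurable_traj_step_param[OF _ P]) measurable
  then have K: "(\<lambda>(e, \<tau>). K e \<tau>) \<in> gauss_pol 0 1 \<Otimes>\<^sub>M D \<rightarrow>\<^sub>M subprob_algebra (trajM SM (Suc n))"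
    by (intro measurable_prob_algebraD) (simp add: sets_D cong: measurable_cong_sets sets_pair_measure_cong)
  have "D \<bind> traj_step SM (\<lambda>s. gauss_pol (m s) \<sigma>) P n = D \<bind> (\<lambda>\<tau>. gauss_pol 0 1 \<bind> (\<lambda>e. K e \<tau>))"
    unfolding K_def
    by (intro bind_cong refl traj_step_gauss_pol_eq_bind[OF \<sigma> P]) (simp add: sets_eq_imp_space_eq[OF sets_D])
  \<comment> \<open>Fubini: the fresh noise can be drawn before the first \<open>n\<close> steps instead of after them.\<close>
  also have "\<dots> = gauss_pol 0 1 \<bind> (\<lambda>e. D \<bind> K e)"
    by (rule bind_rotate[OF K, symmetric])
  also have "\<dots> = gauss_pol 0 1 \<bind> (\<lambda>e. traj_measure SM p0 (\<lambda>i s. return borel (m s + \<sigma> * (\<epsilon>(n := e)) i)) P (Suc n))"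
    unfolding D_def K_def traj_measure_Suc_step
    by (intro bind_cong refl arg_cong2[where f=bind] traj_measure_cong) auto
  finally show ?thesis
    unfolding D_def .
qed

lemma traj_measure_gauss_pol_eq_noise_mixture:
  assumes [measurable]: "m \<in> SM \<rightarrow>\<^sub>M borel" and \<sigma>: "\<forall>k. \<sigma> $ k > 0"
    and P: "(\<lambda>(s, a). P s a) \<in> SM \<Otimes>\<^sub>M borel \<rightarrow>\<^sub>M prob_algebra SM"
    and p0: "prob_space p0" "sets p0 = sets SM"
  shows "traj_measure SM p0 (\<lambda>i s. gauss_pol (m s) \<sigma>) P n
    = noise_measure n \<bind> (\<lambda>\<epsilon>. traj_measure SM p0 (\<lambda>i s. return borel (m s + \<sigma> * \<epsilon> i)) P n)"
proof (induction n)
  case 0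
  have "noise_measure 0 \<bind> (\<lambda>\<epsilon>. traj_measure SM p0 (\<lambda>i s. return borel (m s + \<sigma> * \<epsilon> i)) P 0)
      = traj_measure SM p0 (\<lambda>i s. return borel (m s + \<sigma> * 0)) P 0"
    unfolding noise_measure.simps
    by (rule bind_return[OF measurable_prob_algebraD[OF measurable_traj_measure_noise[OF _ P p0]]]) simp_all
  then show ?case
    by simp
next
  case (Suc n)
  let ?D = "\<lambda>n \<epsilon>. traj_measure SM p0 (\<lambda>i s. return borel (m s + \<sigma> * \<epsilon> i)) P n"
  let ?K = "traj_step SM (\<lambda>s. gauss_pol (m s) \<sigma>) P n"
  have D: "?D n \<in> noise_measure n \<rightarrow>\<^sub>M subprob_algebra (trajM SM n)"
    unfolding measurable_cong_sets[OF sets_noise_measure refl]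
    by (rule measurable_prob_algebraD[OF measurable_traj_measure_noise[OF _ P p0]]) simp
  have K: "?K \<in> trajM SM n \<rightarrow>\<^sub>M subprob_algebra (trajM SM (Suc n))"
    by (rule measurable_prob_algebraD[OF measurable_traj_step[OF measurable_gauss_pol[OF _ \<sigma>] P]]) simp
  have "traj_measure SM p0 (\<lambda>i s. gauss_pol (m s) \<sigma>) P (Suc n) = (noise_measure n \<bind> ?D n) \<bind> ?K"
    by (simp only: traj_measure_Suc_step Suc.IH)
  also have "\<dots> = noise_measure n \<bind> (\<lambda>\<epsilon>. ?D n \<epsilon> \<bind> ?K)"
    by (rule bind_assoc[OF D K])
  also have "\<dots> = noise_measure n \<bind> (\<lambda>\<epsilon>. gauss_pol 0 1 \<bind> (\<lambda>e. ?D (Suc n) (\<epsilon>(n := e))))"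
    by (simp add: traj_measure_noise_bind_gauss_step[OF _ \<sigma> P p0])
  also have "\<dots> = noise_measure (Suc n) \<bind> ?D (Suc n)"
    by (rule bind_noise_measure_Suc[symmetric, OF measurable_prob_algebraD[OF measurable_traj_measure_noise[OF _ P p0]]]) simp
  finally show ?case .
qed

section \<open>The variance bound\<close>

lemma ext_variance_return_noise_mult_bias_score:
  fixes SM :: "'s measure" and m :: "'s \<Rightarrow> real ^ 'k::finite" and R :: "('s, 'k) traj \<Rightarrow> real"
  assumes m: "m \<in> SM \<rightarrow>\<^sub>M borel" and "\<sigma> $ k \<noteq> 0"
    and P: "(\<lambda>(s, a). P s a) \<in> SM \<Otimes>\<^sub>M borel \<rightarrow>\<^sub>M prob_algebra SM"
    and p0: "prob_space p0" "sets p0 = sets SM"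
    and R[measurable]: "R \<in> borel_measurable (trajM SM n)"
  shows "ext_variance (traj_measure SM p0 (\<lambda>i s. return borel (m s + \<sigma> * \<epsilon> i)) P n)
      (\<lambda>\<tau>. R \<tau> * bias_score m \<sigma> k n \<tau>)
    = ennreal (((\<Sum>i<n. \<epsilon> i $ k) / \<sigma> $ k)\<^sup>2)
      * ext_variance (traj_measure SM p0 (\<lambda>i s. return borel (m s + \<sigma> * \<epsilon> i)) P n) R"
proof -
  let ?D = "traj_measure SM p0 (\<lambda>i s. return borel (m s + \<sigma> * \<epsilon> i)) P n"
  let ?A = "(\<Sum>i<n. \<epsilon> i $ k) / \<sigma> $ k"
  have "sets ?D = sets (trajM SM n)"
    using measurable_space[OF measurable_traj_measure_noise[OF m P p0], of \<epsilon>]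
    by (simp add: space_prob_algebra)
  note sets = measurable_cong_sets[OF this refl]
  have "AE \<tau> in ?D. R \<tau> * bias_score m \<sigma> k n \<tau> = ?A * R \<tau>"
    using AE_bias_score_return_noise[OF m \<open>\<sigma> $ k \<noteq> 0\<close> P p0] by eventually_elim simp
  then have "ext_variance ?D (\<lambda>\<tau>. R \<tau> * bias_score m \<sigma> k n \<tau>) = ext_variance ?D (\<lambda>\<tau>. ?A * R \<tau>)"
    using measurable_bias_score[OF m] by (intro ext_variance_cong_AE) (simp_all add: sets)
  then show ?thesis
    by (simp only: ext_variance_scale)
qed

lemma ext_variance_mult_bias_score_ge:
  fixes SM :: "'s measure" and m :: "'s \<Rightarrow> real ^ 'k::finite" and R :: "('s, 'k) traj \<Rightarrow> real"
  assumes m[measurable]: "m \<in> SM \<rightarrow>\<^sub>M borel" and \<sigma>: "\<forall>k. \<sigma> $ k > 0"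
    and P: "(\<lambda>(s, a). P s a) \<in> SM \<Otimes>\<^sub>M borel \<rightarrow>\<^sub>M prob_algebra SM"
    and p0: "prob_space p0" "sets p0 = sets SM"
    and R[measurable]: "R \<in> borel_measurable (trajM SM n)"
    and "c \<ge> 0"
    and cond_var: "\<And>\<epsilon>. ennreal c \<le> ext_variance (traj_measure SM p0 (\<lambda>i s. return borel (m s + \<sigma> * \<epsilon> i)) P n) R"
  shows "ennreal (real n * c / (\<sigma> $ k)\<^sup>2)
    \<le> ext_variance (traj_measure SM p0 (\<lambda>i s. gauss_pol (m s) \<sigma>) P n) (\<lambda>\<tau>. R \<tau> * bias_score m \<sigma> k n \<tau>)"
proof -
  let ?D = "\<lambda>\<epsilon>. traj_measure SM p0 (\<lambda>i s. return borel (m s + \<sigma> * \<epsilon> i)) P n"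
  let ?Y = "\<lambda>\<tau>. R \<tau> * bias_score m \<sigma> k n \<tau>"
  define A where "A \<epsilon> = (\<Sum>i<n. \<epsilon> i $ k) / \<sigma> $ k" for \<epsilon> :: "nat \<Rightarrow> real ^ 'k"
  have D: "?D \<in> noise_measure n \<rightarrow>\<^sub>M prob_algebra (trajM SM n)"
    unfolding measurable_cong_sets[OF sets_noise_measure refl]
    by (rule measurable_traj_measure_noise[OF m P p0])
  have Y: "?Y \<in> borel_measurable (trajM SM n)"
    using measurable_bias_score[OF m] by measurable
  have "\<sigma> $ k \<noteq> 0"
    using \<sigma> by (metis less_irrefl)
  note var_Y = ext_variance_return_noise_mult_bias_score[OF m this P p0 R]
  have "ennreal (real n * c / (\<sigma> $ k)\<^sup>2) = ennreal (c / (\<sigma> $ k)\<^sup>2) * ennreal (real n)"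
    using \<open>c \<ge> 0\<close> by (simp add: ennreal_mult[symmetric])
  also have "\<dots> = ennreal (c / (\<sigma> $ k)\<^sup>2) * (\<integral>\<^sup>+\<epsilon>. ennreal ((\<Sum>i<n. \<epsilon> i $ k)\<^sup>2) \<partial>noise_measure n)"
    using nn_integral_noise_measure_sum_sq[where x=0 and n=n and k=k] by simp
  also have "\<dots> = (\<integral>\<^sup>+\<epsilon>. ennreal (c / (\<sigma> $ k)\<^sup>2) * ennreal ((\<Sum>i<n. \<epsilon> i $ k)\<^sup>2) \<partial>noise_measure n)"
    by (rule nn_integral_cmult[symmetric]) measurable
  also have "\<dots> = (\<integral>\<^sup>+\<epsilon>. ennreal ((A \<epsilon>)\<^sup>2) * ennreal c \<partial>noise_measure n)"
    using \<open>c \<ge> 0\<close> by (intro nn_integral_cong) (simp add: A_def ennreal_mult[symmetric] power_divide)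
  also have "\<dots> \<le> (\<integral>\<^sup>+\<epsilon>. ennreal ((A \<epsilon>)\<^sup>2) * ext_variance (?D \<epsilon>) R \<partial>noise_measure n)"
    by (intro nn_integral_mono mult_left_mono cond_var) simp
  also have "\<dots> = (\<integral>\<^sup>+\<epsilon>. ext_variance (?D \<epsilon>) ?Y \<partial>noise_measure n)"
    by (simp add: var_Y A_def)
  also have "\<dots> \<le> ext_variance (noise_measure n \<bind> ?D) ?Y"
    by (rule nn_integral_ext_variance_le_bind[OF D Y])
  also have "\<dots> = ext_variance (traj_measure SM p0 (\<lambda>i s. gauss_pol (m s) \<sigma>) P n) ?Y"
    by (simp add: traj_measure_gauss_pol_eq_noise_mixture[OF m \<sigma> P p0])
  finally show ?thesis .
qed

lemma ext_variance_pg_estimator_bias_ge: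
  fixes SM :: "'s measure" and mu' :: "real ^ 'p::finite \<Rightarrow> 's \<Rightarrow> real ^ 'k::finite"
    and R :: "('s, 'k) traj \<Rightarrow> real"
  assumes P: "(\<lambda>(s, a). P s a) \<in> SM \<Otimes>\<^sub>M borel \<rightarrow>\<^sub>M prob_algebra SM"
    and p0: "prob_space p0" "sets p0 = sets SM"
    and mu_meas: "(\<lambda>s. mu' \<theta>p s) \<in> SM \<rightarrow>\<^sub>M borel"
    and mu_diff: "\<forall>s\<in>space SM. (\<lambda>p. mu' p s) differentiable (at \<theta>p)"
    and \<sigma>: "\<forall>k. \<sigma> $ k > 0"
    and R: "R \<in> borel_measurable (trajM SM N)"
    and "c \<ge> 0"
    and cond_var: "\<And>\<epsilon>. ennreal c \<le> ext_variance
      (traj_measure SM p0 (\<lambda>i s. return borel (mu' \<theta>p s + b + \<sigma> * \<epsilon> i)) P N) R"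
  shows "ennreal (real N * c / (\<sigma> $ k)\<^sup>2)
    \<le> ext_variance (traj_measure SM p0 (\<lambda>i s. gauss_pol (mu' \<theta>p s + b) \<sigma>) P N)
        (\<lambda>\<tau>. pg_estimator mu' (\<theta>p, b, \<sigma>) N R \<tau> \<bullet> (0, axis k 1, 0))"
proof -
  let ?G = "traj_measure SM p0 (\<lambda>i s. gauss_pol (mu' \<theta>p s + b) \<sigma>) P N"
  have mean: "(\<lambda>s. mu' \<theta>p s + b) \<in> SM \<rightarrow>\<^sub>M borel"
    by (rule borel_measurable_add[OF mu_meas borel_measurable_const])
  have "?G \<in> space (prob_algebra (trajM SM N))"
    by (rule traj_measure_in_prob_algebra[OF measurable_gauss_pol[OF mean \<sigma>] P p0])
  then have space_G: "space ?G = space (trajM SM N)"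
    by (intro sets_eq_imp_space_eq) (simp add: space_prob_algebra)
  have "ext_variance ?G (\<lambda>\<tau>. R \<tau> * bias_score (\<lambda>s. mu' \<theta>p s + b) \<sigma> k N \<tau>)
      = ext_variance ?G (\<lambda>\<tau>. pg_estimator mu' (\<theta>p, b, \<sigma>) N R \<tau> \<bullet> (0, axis k 1, 0))"
  proof (rule ext_variance_cong)
    fix \<tau> assume "\<tau> \<in> space ?G"
    then have "fst \<tau> i \<in> space SM" if "i < N" for i
      using measurable_space[OF measurable_traj_state[of i N SM]] that by (simp add: space_G)
    then show "R \<tau> * bias_score (\<lambda>s. mu' \<theta>p s + b) \<sigma> k N \<tau>
        = pg_estimator mu' (\<theta>p, b, \<sigma>) N R \<tau> \<bullet> (0, axis k 1, 0)"
      using mu_diff \<sigma> by (simp add: pg_estimator_inner_bias)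
  qed
  moreover have "ennreal (real N * c / (\<sigma> $ k)\<^sup>2)
      \<le> ext_variance ?G (\<lambda>\<tau>. R \<tau> * bias_score (\<lambda>s. mu' \<theta>p s + b) \<sigma> k N \<tau>)"
    using cond_var \<open>c \<ge> 0\<close>
    by (intro ext_variance_mult_bias_score_ge[OF mean \<sigma> P p0 R]) (simp_all add: add.assoc)
  ultimately show ?thesis
    by simp
qed

lemma bias_direction_in_Basis:
  "(0, axis k 1, 0) \<in> (Basis :: ((real ^ 'p::finite) \<times> (real ^ 'k::finite) \<times> (real ^ 'k)) set)"
proof -
  have "(axis k 1, 0) \<in> (Basis :: ((real ^ 'k) \<times> (real ^ 'k)) set)"
    by (auto simp: Basis_prod_def Basis_vec_def)
  then show ?thesis
    unfolding Basis_prod_def[where 'a="real ^ 'p"] by (intro UnI2 imageI)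
qed

theorem theorem1:
  fixes SM :: "'s measure"
    and p0 :: "'s measure"
    and P :: "'s \<Rightarrow> real ^ 'k \<Rightarrow> 's measure"
    and mu' :: "real ^ 'p \<Rightarrow> 's \<Rightarrow> real ^ 'k::finite"
    and \<theta>p :: "real ^ 'p::finite" and b \<sigma> :: "real ^ 'k"
    and R :: "('s, 'k) traj \<Rightarrow> real"
    and T \<delta> c :: real and N :: nat
  assumes T_pos: "T > 0" and delta_pos: "\<delta> > 0"
    and N_def: "real N = T / \<delta>"
    and p0: "prob_space p0" "sets p0 = sets SM"
    and P_kernel: "(\<lambda>(s, a). P s a) \<in> SM \<Otimes>\<^sub>M borel \<rightarrow>\<^sub>M prob_algebra SM"
    and mu_meas: "(\<lambda>s. mu' \<theta>p s) \<in> SM \<rightarrow>\<^sub>M borel"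
    and mu_diff: "\<forall>s\<in>space SM. (\<lambda>p. mu' p s) differentiable (at \<theta>p)"
    and sigma_pos: "\<forall>k. \<sigma> $ k > 0"
    and R_meas: "R \<in> borel_measurable (trajM SM N)"
    and c_pos: "c > 0"
    and cond_var: "\<forall>\<epsilon> :: nat \<Rightarrow> real ^ 'k.
       ennreal c \<le> ext_variance
         (traj_measure SM p0 (\<lambda>i s. return borel (mu' \<theta>p s + b + \<sigma> * \<epsilon> i)) P N) R"
  shows "ennreal (T * c / (\<delta> * Min (range (\<lambda>k. (\<sigma> $ k)\<^sup>2))))
     \<le> trace_cov (traj_measure SM p0 (\<lambda>i s. gauss_pol (mu' \<theta>p s + b) \<sigma>) P N)
                  (pg_estimator mu' (\<theta>p, b, \<sigma>) N R)"
proof -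
  have "Min (range (\<lambda>k. (\<sigma> $ k)\<^sup>2)) \<in> range (\<lambda>k. (\<sigma> $ k)\<^sup>2)"
    by (rule Min_in) auto
  then obtain k where k: "Min (range (\<lambda>k. (\<sigma> $ k)\<^sup>2)) = (\<sigma> $ k)\<^sup>2"
    by blast
  have "T * c / (\<delta> * Min (range (\<lambda>k. (\<sigma> $ k)\<^sup>2))) = real N * c / (\<sigma> $ k)\<^sup>2"
    using N_def delta_pos sigma_pos[rule_format, of k] by (simp add: k field_simps)
  then have "ennreal (T * c / (\<delta> * Min (range (\<lambda>k. (\<sigma> $ k)\<^sup>2)))) = ennreal (real N * c / (\<sigma> $ k)\<^sup>2)"
    by simp
  also have "\<dots> \<le> ext_variance (traj_measure SM p0 (\<lambda>i s. gauss_pol (mu' \<theta>p s + b) \<sigma>) P N)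
      (\<lambda>\<tau>. pg_estimator mu' (\<theta>p, b, \<sigma>) N R \<tau> \<bullet> (0, axis k 1, 0))"
    using cond_var c_pos
    by (intro ext_variance_pg_estimator_bias_ge[OF P_kernel p0 mu_meas mu_diff sigma_pos R_meas]) auto
  also have "\<dots> \<le> trace_cov (traj_measure SM p0 (\<lambda>i s. gauss_pol (mu' \<theta>p s + b) \<sigma>) P N)
      (pg_estimator mu' (\<theta>p, b, \<sigma>) N R)"
    by (rule ext_variance_inner_le_trace_cov[OF bias_direction_in_Basis])
  finally show ?thesis .
qed

end
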